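(* Let $X$ be a set with at least four elements and let $\Lambda$ be a nontrivial finite distributive lattice. Then there exists an idempotent $e$ in the monoid $\Lambda^{X\times X}$ of $\Lambda$-generalized correspondences on $X$ such that the monoid $e\,\Lambda^{X\times X} e$ is isomorphic to the monoid of binary relations on a set of four elements.
   Context: A $\Lambda$-generalized correspondence on $X$ is a function $X\times X\to\Lambda$. The product of two such, $R$ and $S$, is defined by $RS(x,z)=\bigvee_{y\in X} R(x,y)\wedge S(y,z)$ for all $x,z\in X$; with this product the set $\Lambda^{X\times X}$ of all $\Lambda$-generalized correspondences is a monoid. The monoid of binary relations on a set $Y$ is the set of all subsets of $Y\times Y$ under composition of relations. Nontrivial means $\Lambda$ has more than one element. For an idempotent $e$, $eMe=\{eme : m\in M\}$ is a monoid with identity $e$. *)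

theory Defs
  imports Main "HOL-Library.Finite_Lattice"
begin

text \<open>A Lambda-generalized correspondence on X is a (curried) function X -> X -> Lambda.
  Product: (R S)(x,z) = Sup over y of (R x y) inf (S y z).\<close>

definition gc_mult :: "('x \<Rightarrow> 'x \<Rightarrow> 'l::complete_lattice) \<Rightarrow> ('x \<Rightarrow> 'x \<Rightarrow> 'l) \<Rightarrow> ('x \<Rightarrow> 'x \<Rightarrow> 'l)" where
  "gc_mult R S = (\<lambda>x z. SUP y. inf (R x y) (S y z))"

definition gc_corner :: "('x \<Rightarrow> 'x \<Rightarrow> 'l::complete_lattice) \<Rightarrow> ('x \<Rightarrow> 'x \<Rightarrow> 'l) set" where
  "gc_corner e = {gc_mult (gc_mult e m) e | m. True}"

definition corner_iso_rel :: "('x \<Rightarrow> 'x \<Rightarrow> 'l::complete_lattice) \<Rightarrow> 'y set \<Rightarrow>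
    (('x \<Rightarrow> 'x \<Rightarrow> 'l) \<Rightarrow> 'y rel) \<Rightarrow> bool" where
  "corner_iso_rel e Y \<phi> \<longleftrightarrow>
     bij_betw \<phi> (gc_corner e) (Pow (Y \<times> Y)) \<and>
     (\<forall>a\<in>gc_corner e. \<forall>b\<in>gc_corner e. \<phi> (gc_mult a b) = \<phi> a O \<phi> b) \<and>
     \<phi> e = Id_on Y"

end

theory Submission
  imports Defs
begin

text \<open>Fix an atom \<open>c\<close> of \<open>\<Lambda>\<close> (it exists because \<open>\<Lambda>\<close> is finite and nontrivial) and a
  four-element subset \<open>A\<close> of \<open>X\<close>. Every binary relation \<open>R\<close> on \<open>X\<close> gives a correspondence
  taking the value \<open>c\<close> on \<open>R\<close> and \<open>\<bottom>\<close> elsewhere, and these correspondences multiply like the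
  relations themselves. For \<open>e\<close> the image of the diagonal of \<open>A\<close>, the product \<open>e M e\<close> is
  \<open>c \<sqinter> M x z\<close> on \<open>A \<times> A\<close>, which is \<open>\<bottom>\<close> or \<open>c\<close> because \<open>c\<close> is an atom; hence \<open>e \<Lambda>\<^sup>X\<^sup>\<times>\<^sup>X e\<close>
  consists exactly of the images of the relations on \<open>A\<close>, and taking supports is the
  required isomorphism.\<close>

definition gc_of_rel :: "'l::complete_lattice \<Rightarrow> 'x rel \<Rightarrow> 'x \<Rightarrow> 'x \<Rightarrow> 'l" where
  "gc_of_rel c R = (\<lambda>x z. if (x, z) \<in> R then c else bot)"

definition gc_support :: "('x \<Rightarrow> 'x \<Rightarrow> 'l::complete_lattice) \<Rightarrow> 'x rel" where
  "gc_support M = {(x, z). M x z \<noteq> bot}"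

lemma SUP_if_bot:
  "(SUP y. if B y then c else bot) = (if \<exists>y. B y then c else (bot::'l::complete_lattice))"
proof (cases "\<exists>y. B y")
  case True
  then obtain y where "B y" by blast
  then have "c \<le> (SUP y. if B y then c else bot)"
    by (metis (mono_tags, lifting) SUP_upper UNIV_I)
  moreover have "(SUP y. if B y then c else bot) \<le> c"
    by (rule SUP_least) auto
  ultimately show ?thesis
    using True by (simp add: antisym)
qed simp

lemma gc_mult_gc_of_rel: "gc_mult (gc_of_rel c R) (gc_of_rel c S) = gc_of_rel c (R O S)"
proof -
  have "(SUP y. inf (gc_of_rel c R x y) (gc_of_rel c S y z))
      = (SUP y. if (x, y) \<in> R \<and> (y, z) \<in> S then c else bot)" for x z
    by (rule SUP_cong) (auto simp: gc_of_rel_def)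
  then show ?thesis
    unfolding gc_mult_def by (simp only: SUP_if_bot) (auto simp: gc_of_rel_def fun_eq_iff)
qed

lemma gc_support_gc_of_rel: "c \<noteq> bot \<Longrightarrow> gc_support (gc_of_rel c R) = R"
  by (auto simp: gc_support_def gc_of_rel_def)

lemma gc_mult_gc_of_Id_on_left:
  "gc_mult (gc_of_rel c (Id_on A)) M = (\<lambda>x z. if x \<in> A then inf c (M x z) else bot)"
proof -
  have "(SUP y. inf (gc_of_rel c (Id_on A) x y) (M y z))
      = (SUP y. if y = x then (if x \<in> A then inf c (M x z) else bot) else bot)" for x z
    by (rule SUP_cong) (auto simp: gc_of_rel_def)
  then show ?thesis
    unfolding gc_mult_def by (simp only: SUP_if_bot) auto
qed

lemma gc_mult_gc_of_Id_on_right: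
  "gc_mult M (gc_of_rel c (Id_on A)) = (\<lambda>x z. if z \<in> A then inf (M x z) c else bot)"
proof -
  have "(SUP y. inf (M x y) (gc_of_rel c (Id_on A) y z))
      = (SUP y. if y = z then (if z \<in> A then inf (M x z) c else bot) else bot)" for x z
    by (rule SUP_cong) (auto simp: gc_of_rel_def)
  then show ?thesis
    unfolding gc_mult_def by (simp only: SUP_if_bot) auto
qed

lemma gc_corner_gc_of_Id_on:
  assumes atom: "\<And>y. y \<le> c \<Longrightarrow> y = bot \<or> y = c"
  shows "gc_corner (gc_of_rel c (Id_on A)) = gc_of_rel c ` Pow (A \<times> A)"
proof (intro equalityI subsetI)
  fix N assume "N \<in> gc_corner (gc_of_rel c (Id_on A))"
  then obtain M where N: "N = gc_mult (gc_mult (gc_of_rel c (Id_on A)) M) (gc_of_rel c (Id_on A))"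
    unfolding gc_corner_def by blast
  have "inf c (M x z) = bot \<or> inf c (M x z) = c" for x z
    using atom by simp
  then have "N = gc_of_rel c {(x, z) \<in> A \<times> A. inf c (M x z) \<noteq> bot}"
    unfolding N gc_mult_gc_of_Id_on_left gc_mult_gc_of_Id_on_right
    by (fastforce simp: gc_of_rel_def fun_eq_iff inf_commute inf_left_commute)
  then show "N \<in> gc_of_rel c ` Pow (A \<times> A)"
    by blast
next
  fix N assume "N \<in> gc_of_rel c ` Pow (A \<times> A)"
  then obtain R where R: "R \<subseteq> A \<times> A" and N: "N = gc_of_rel c R"
    by blast
  have "(Id_on A O R) O Id_on A = R"
    using R by auto
  then have "N = gc_mult (gc_mult (gc_of_rel c (Id_on A)) N) (gc_of_rel c (Id_on A))"
    unfolding N gc_mult_gc_of_rel by simp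
  then show "N \<in> gc_corner (gc_of_rel c (Id_on A))"
    unfolding gc_corner_def by blast
qed

lemma corner_iso_rel_gc_support:
  assumes "c \<noteq> bot" and "\<And>y. y \<le> c \<Longrightarrow> y = bot \<or> y = c"
  shows "corner_iso_rel (gc_of_rel c (Id_on A)) A gc_support"
proof -
  have corner: "gc_corner (gc_of_rel c (Id_on A)) = gc_of_rel c ` Pow (A \<times> A)"
    using assms(2) by (rule gc_corner_gc_of_Id_on)
  have support: "\<And>R. gc_support (gc_of_rel c R) = R"
    using assms(1) by (rule gc_support_gc_of_rel)
  have "bij_betw gc_support (gc_of_rel c ` Pow (A \<times> A)) (Pow (A \<times> A))"
    by (auto simp: bij_betw_def inj_on_def support image_image)
  then show ?thesis
    unfolding corner_iso_rel_def corner by (auto simp: gc_mult_gc_of_rel support)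
qed

lemma bij_betw_inv_image_Pow:
  assumes "bij_betw g Y A"
  shows "bij_betw (\<lambda>R. Restr (inv_image R g) Y) (Pow (A \<times> A)) (Pow (Y \<times> Y))"
proof (rule bij_betw_byWitness[where f' = "image (map_prod g g)"])
  have inj: "inj_on (map_prod g g) (Y \<times> Y)" and surj: "g ` Y = A"
    using assms by (auto simp: bij_betw_def map_prod_inj_on)
  show "\<forall>R \<in> Pow (A \<times> A). map_prod g g ` (Restr (inv_image R g) Y) = R"
  proof
    fix R assume "R \<in> Pow (A \<times> A)"
    then have "R \<subseteq> map_prod g g ` (Y \<times> Y)"
      using surj by (simp add: map_prod_surj_on)
    then show "map_prod g g ` (Restr (inv_image R g) Y) = R"
      by (auto simp: inv_image_def)
  qed
  show "\<forall>S \<in> Pow (Y \<times> Y). Restr (inv_image (map_prod g g ` S) g) Y = S"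
  proof
    fix S assume S: "S \<in> Pow (Y \<times> Y)"
    then have "(g i, g j) \<in> map_prod g g ` S \<longleftrightarrow> (i, j) \<in> S" if "i \<in> Y" "j \<in> Y" for i j
      using inj_on_image_mem_iff[OF inj, of "(i, j)" S] that by auto
    then have "(i, j) \<in> Restr (inv_image (map_prod g g ` S) g) Y \<longleftrightarrow> (i, j) \<in> S" for i j
      using S by (cases "i \<in> Y \<and> j \<in> Y") (simp_all add: inv_image_def, auto)
    then show "Restr (inv_image (map_prod g g ` S) g) Y = S"
      by (intro subset_antisym subrelI) simp_all
  qed
  show "(\<lambda>R. Restr (inv_image R g) Y) ` Pow (A \<times> A) \<subseteq> Pow (Y \<times> Y)"
    by auto
  show "image (map_prod g g) ` Pow (Y \<times> Y) \<subseteq> Pow (A \<times> A)"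
    using surj by auto
qed

lemma inv_image_relcomp:
  assumes "bij_betw g Y A" and "R \<subseteq> A \<times> A"
  shows "Restr (inv_image (R O S) g) Y = (Restr (inv_image R g) Y) O (Restr (inv_image S g) Y)"
proof -
  have "\<exists>j\<in>Y. g j = y" if "y \<in> A" for y
    using assms(1) that by (auto simp: bij_betw_def)
  with assms(2) show ?thesis
    by (auto simp: inv_image_def)
qed

lemma inv_image_Id_on:
  assumes "bij_betw g Y A"
  shows "Restr (inv_image (Id_on A) g) Y = Id_on Y"
  using assms by (auto simp: inv_image_def bij_betw_def inj_on_def)

lemma corner_iso_rel_transfer:
  assumes iso: "corner_iso_rel e A \<phi>" and g: "bij_betw g Y A"
  shows "corner_iso_rel e Y (\<lambda>M. Restr (inv_image (\<phi> M) g) Y)"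
proof -
  have bij: "bij_betw \<phi> (gc_corner e) (Pow (A \<times> A))"
    and hom: "\<And>a b. a \<in> gc_corner e \<Longrightarrow> b \<in> gc_corner e \<Longrightarrow> \<phi> (gc_mult a b) = \<phi> a O \<phi> b"
    and unit: "\<phi> e = Id_on A"
    using iso by (auto simp: corner_iso_rel_def)
  have "bij_betw ((\<lambda>R. Restr (inv_image R g) Y) \<circ> \<phi>) (gc_corner e) (Pow (Y \<times> Y))"
    using bij bij_betw_inv_image_Pow[OF g] by (rule bij_betw_trans)
  moreover have "\<phi> a \<subseteq> A \<times> A" if "a \<in> gc_corner e" for a
    using bij that by (auto simp: bij_betw_def)
  ultimately show ?thesis
    unfolding corner_iso_rel_def
    by (simp add: o_def hom unit inv_image_relcomp[OF g] inv_image_Id_on[OF g])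
qed

lemma finite_lattice_ex_atom:
  assumes "\<exists>a::'l::{finite, order_bot}. a \<noteq> bot"
  shows "\<exists>c::'l. c \<noteq> bot \<and> (\<forall>y \<le> c. y = bot \<or> y = c)"
proof -
  obtain c :: 'l where "c \<noteq> bot" and "\<And>y. y \<noteq> bot \<Longrightarrow> y \<le> c \<Longrightarrow> c = y"
    using finite_has_minimal[of "{y::'l. y \<noteq> bot}"] assms by auto
  then show ?thesis
    by blast
qed

theorem lemma10:
  assumes X4: "\<exists>A :: 'x set. finite A \<and> card A = 4"
    and nontriv: "\<exists>a b :: 'l::finite_distrib_lattice_complete. a \<noteq> b"
  shows "\<exists>e :: 'x \<Rightarrow> 'x \<Rightarrow> 'l. gc_mult e e = e \<and>
           (\<exists>\<phi>. corner_iso_rel e {0..<4::nat} \<phi>)"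
proof -
  obtain A :: "'x set" where "finite A" "card A = 4"
    using X4 by blast
  then obtain g where g: "bij_betw g {0..<4::nat} A"
    by (metis ex_bij_betw_nat_finite)
  have "\<exists>a::'l. a \<noteq> bot"
    using nontriv by metis
  then obtain c :: 'l where "c \<noteq> bot" and atom: "\<forall>y \<le> c. y = bot \<or> y = c"
    using finite_lattice_ex_atom by blast
  define e where "e = gc_of_rel c (Id_on A)"
  have "Id_on A O Id_on A = Id_on A"
    by auto
  then have "gc_mult e e = e"
    unfolding e_def gc_mult_gc_of_rel by simp
  moreover have "corner_iso_rel e A gc_support"
    unfolding e_def using \<open>c \<noteq> bot\<close> atom by (intro corner_iso_rel_gc_support) auto
  ultimately show ?thesis
    using corner_iso_rel_transfer[OF _ g] by blast
qed

end
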